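(* Let $G$ be a maximal $3$-$\gamma_{c}$-vertex critical graph with independence number $\alpha$ and connectivity $\kappa$. Then $\alpha\leq\kappa$.
   Context: All graphs are finite, simple and connected. The connectivity $\kappa(G)$ is the minimum cardinality of a vertex set whose removal disconnects $G$. A set $D\subseteq V(G)$ is a connected dominating set of $G$ if every vertex of $G$ is in $D$ or adjacent to a vertex of $D$, and $G[D]$ is connected; $\gamma_{c}(G)$ is the minimum cardinality of such a set. $G$ is $k$-$\gamma_{c}$-edge critical if $\gamma_{c}(G)=k$ and $\gamma_{c}(G+uv)<k$ for every pair of non-adjacent vertices $u,v$. A $2$-connected graph $G$ is $k$-$\gamma_{c}$-vertex critical if $\gamma_{c}(G)=k$ and $\gamma_{c}(G-v)<k$ for every $v\in V(G)$. $G$ is maximal $k$-$\gamma_{c}$-vertex critical if it is both $k$-$\gamma_{c}$-edge critical and $k$-$\gamma_{c}$-vertex critical. *)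

theory Defs
  imports Main
begin

definition simple_graph :: "'a set \<Rightarrow> ('a \<Rightarrow> 'a \<Rightarrow> bool) \<Rightarrow> bool" where
  "simple_graph V E \<longleftrightarrow> finite V \<and> V \<noteq> {} \<and>
     (\<forall>u v. E u v \<longrightarrow> u \<in> V \<and> v \<in> V) \<and>
     (\<forall>u v. E u v \<longrightarrow> E v u) \<and> (\<forall>v. \<not> E v v)"

inductive reach_in :: "'a set \<Rightarrow> ('a \<Rightarrow> 'a \<Rightarrow> bool) \<Rightarrow> 'a \<Rightarrow> 'a \<Rightarrow> bool"
  for S E where
  refl: "v \<in> S \<Longrightarrow> reach_in S E v v"
| step: "reach_in S E u v \<Longrightarrow> E v w \<Longrightarrow> w \<in> S \<Longrightarrow> reach_in S E u w"

definition connected_in :: "'a set \<Rightarrow> ('a \<Rightarrow> 'a \<Rightarrow> bool) \<Rightarrow> bool" where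
  "connected_in S E \<longleftrightarrow> S \<noteq> {} \<and> (\<forall>u\<in>S. \<forall>v\<in>S. reach_in S E u v)"

definition separating_set :: "'a set \<Rightarrow> ('a \<Rightarrow> 'a \<Rightarrow> bool) \<Rightarrow> 'a set \<Rightarrow> bool" where
  "separating_set V E S \<longleftrightarrow> S \<subseteq> V \<and> V - S \<noteq> {} \<and> \<not> connected_in (V - S) E"

text \<open>Connectivity: minimum size of a separating set; for complete graphs
  (no separating set exists) the standard convention kappa(K_n) = n - 1.\<close>
definition connectivity :: "'a set \<Rightarrow> ('a \<Rightarrow> 'a \<Rightarrow> bool) \<Rightarrow> nat" where
  "connectivity V E =
     (if \<exists>S. separating_set V E S
      then (LEAST k. \<exists>S. separating_set V E S \<and> card S = k)
      else card V - 1)"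

definition independent_set :: "'a set \<Rightarrow> ('a \<Rightarrow> 'a \<Rightarrow> bool) \<Rightarrow> 'a set \<Rightarrow> bool" where
  "independent_set V E I \<longleftrightarrow> I \<subseteq> V \<and> (\<forall>u\<in>I. \<forall>v\<in>I. \<not> E u v)"

definition independence_number :: "'a set \<Rightarrow> ('a \<Rightarrow> 'a \<Rightarrow> bool) \<Rightarrow> nat" where
  "independence_number V E = Max {card I | I. independent_set V E I}"

definition connected_dominating_set :: "'a set \<Rightarrow> ('a \<Rightarrow> 'a \<Rightarrow> bool) \<Rightarrow> 'a set \<Rightarrow> bool" where
  "connected_dominating_set V E D \<longleftrightarrow> D \<subseteq> V \<and>
     (\<forall>v\<in>V. v \<in> D \<or> (\<exists>d\<in>D. E v d)) \<and> connected_in D E"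

definition gamma_c :: "'a set \<Rightarrow> ('a \<Rightarrow> 'a \<Rightarrow> bool) \<Rightarrow> nat" where
  "gamma_c V E = (LEAST k. \<exists>D. connected_dominating_set V E D \<and> card D = k)"

definition add_edge :: "('a \<Rightarrow> 'a \<Rightarrow> bool) \<Rightarrow> 'a \<Rightarrow> 'a \<Rightarrow> 'a \<Rightarrow> 'a \<Rightarrow> bool" where
  "add_edge E u v = (\<lambda>x y. E x y \<or> (x = u \<and> y = v) \<or> (x = v \<and> y = u))"

definition del_vertex :: "('a \<Rightarrow> 'a \<Rightarrow> bool) \<Rightarrow> 'a \<Rightarrow> 'a \<Rightarrow> 'a \<Rightarrow> bool" where
  "del_vertex E w = (\<lambda>x y. E x y \<and> x \<noteq> w \<and> y \<noteq> w)"

definition edge_critical :: "nat \<Rightarrow> 'a set \<Rightarrow> ('a \<Rightarrow> 'a \<Rightarrow> bool) \<Rightarrow> bool" where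
  "edge_critical k V E \<longleftrightarrow> gamma_c V E = k \<and>
     (\<forall>u\<in>V. \<forall>v\<in>V. u \<noteq> v \<and> \<not> E u v \<longrightarrow> gamma_c V (add_edge E u v) < k)"

definition vertex_critical :: "nat \<Rightarrow> 'a set \<Rightarrow> ('a \<Rightarrow> 'a \<Rightarrow> bool) \<Rightarrow> bool" where
  "vertex_critical k V E \<longleftrightarrow> connectivity V E \<ge> 2 \<and> gamma_c V E = k \<and>
     (\<forall>v\<in>V. gamma_c (V - {v}) (del_vertex E v) < k)"

definition maximal_vertex_critical :: "nat \<Rightarrow> 'a set \<Rightarrow> ('a \<Rightarrow> 'a \<Rightarrow> bool) \<Rightarrow> bool" where
  "maximal_vertex_critical k V E \<longleftrightarrow> edge_critical k V E \<and> vertex_critical k V E"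

end

theory Submission
  imports Defs
begin

text \<open>Since \<open>\<gamma>\<^sub>c(G) = 3\<close>, no connected pair dominates \<open>G\<close>. Edge-criticality therefore makes any
  two non-adjacent vertices \<open>a, b\<close> either a dominating pair or joined by an arrow \<open>[a, x] \<mapsto> b\<close>,
  and vertex-criticality gives, for every \<open>u\<close>, a connected pair dominating \<open>G - u\<close> outside
  \<open>N[u]\<close>; in particular no closed neighbourhood contains another one.

  To show \<open>|I| \<le> |S|\<close> for an independent set \<open>I\<close> and a separating set \<open>S\<close>, note first that
  \<open>S \<subseteq> I\<close> forces \<open>I = S\<close>, by following components of \<open>G - S\<close>. If \<open>G - S\<close> has an isolated
  vertex \<open>c\<close>, it suffices to show \<open>|I| \<le> deg c\<close>; otherwise compare \<open>W = I - S\<close> with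
  \<open>T = S - I\<close>. Both arguments (for the degree bound, \<open>W = I - N(c)\<close> and \<open>T = N(c) - I\<close>) share
  one core: any two vertices of \<open>W\<close> are joined by an arrow whose witness lies in \<open>T\<close> and misses
  exactly one vertex of \<open>I\<close>. If \<open>|T| < |W|\<close>, counting makes \<open>T\<close> a clique each of whose vertices
  misses exactly one vertex of \<open>W\<close>, and a connected pair dominating \<open>G - t\<close> for some \<open>t \<in> T\<close>
  leads to a contradiction.\<close>

lemma reach_in_mem: "reach_in A F u v \<Longrightarrow> u \<in> A \<and> v \<in> A"
  by (induction rule: reach_in.induct) auto

lemma reach_in_trans: "reach_in A F v w \<Longrightarrow> reach_in A F u v \<Longrightarrow> reach_in A F u w"
  by (induction rule: reach_in.induct) (auto intro: reach_in.step)

lemma reach_in_edge: "u \<in> A \<Longrightarrow> w \<in> A \<Longrightarrow> F u w \<Longrightarrow> reach_in A F u w"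
  by (meson reach_in.refl reach_in.step)

lemma reach_in_sym:
  assumes "reach_in A F u v" and sym: "\<And>x y. F x y \<Longrightarrow> F y x"
  shows "reach_in A F v u"
  using assms(1)
proof (induction rule: reach_in.induct)
  case (refl v)
  then show ?case by (rule reach_in.refl)
next
  case (step u v w)
  then have "reach_in A F w v" using reach_in_mem reach_in_edge sym by metis
  then show ?case using step.IH reach_in_trans by metis
qed

lemma reach_in_mono:
  assumes "reach_in A E u v" and "\<And>x y. x \<in> A \<Longrightarrow> y \<in> A \<Longrightarrow> E x y \<Longrightarrow> F x y"
  shows "reach_in A F u v"
  using assms(1)
  by (induction rule: reach_in.induct) (auto intro: reach_in.intros assms(2) dest: reach_in_mem)

lemma reach_in_from_isolated:
  assumes "reach_in A F u w" and "\<And>z. F u z \<Longrightarrow> z \<notin> A"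
  shows "w = u"
  using assms by (induction rule: reach_in.induct) auto

lemma reach_in_doubleton: "reach_in {p, q} F u w \<Longrightarrow> u = w \<or> F p q \<or> F q p"
proof (induction rule: reach_in.induct)
  case (step u v w)
  then show ?case using reach_in_mem[OF step.hyps(1)] by auto
qed simp

lemma connected_inI:
  assumes "p \<in> A" and "\<And>y. y \<in> A \<Longrightarrow> reach_in A F p y" and "\<And>x y. F x y \<Longrightarrow> F y x"
  shows "connected_in A F"
  unfolding connected_in_def
proof (intro conjI ballI)
  show "A \<noteq> {}" using assms(1) by blast
  fix u v assume "u \<in> A" and "v \<in> A"
  then show "reach_in A F u v"
    using assms(2) reach_in_sym[OF assms(2) assms(3)] reach_in_trans by metis
qed

lemma connected_in_mono:
  assumes "connected_in A E" and "\<And>x y. x \<in> A \<Longrightarrow> y \<in> A \<Longrightarrow> E x y \<Longrightarrow> F x y"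
  shows "connected_in A F"
  using assms reach_in_mono[of A E _ _ F] unfolding connected_in_def by blast

lemma not_connected_in_unreachable:
  assumes "\<not> connected_in A F" and "b \<in> A" and "\<And>x y. F x y \<Longrightarrow> F y x"
  obtains d where "d \<in> A" and "\<not> reach_in A F b d"
  using connected_inI[of b A F] assms by blast

section \<open>Connected pairs and connected domination\<close>

definition dominates_pair :: "'a set \<Rightarrow> ('a \<Rightarrow> 'a \<Rightarrow> bool) \<Rightarrow> 'a \<Rightarrow> 'a \<Rightarrow> bool" where
  "dominates_pair A F p q \<longleftrightarrow> (\<forall>y\<in>A. y = p \<or> y = q \<or> F y p \<or> F y q)"

lemma dominates_pairD: "dominates_pair A F p q \<Longrightarrow> y \<in> A \<Longrightarrow> y = p \<or> y = q \<or> F y p \<or> F y q"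
  unfolding dominates_pair_def by blast

lemma dominates_pair_commute: "dominates_pair A F p q \<longleftrightarrow> dominates_pair A F q p"
  unfolding dominates_pair_def by blast

lemma dominating_pair_through:
  assumes "p = q \<or> F p q" and "\<And>x y. F x y \<Longrightarrow> F y x" and "dominates_pair A F p q"
    and "c \<in> {p, q}"
  obtains x where "x \<in> {p, q}" and "c = x \<or> F c x" and "dominates_pair A F c x"
proof (cases "c = p")
  case True
  then show thesis
    using that assms(1,3) by blast
next
  case False
  then have "c = q"
    using assms(4) by blast
  then show thesis
    using that[of p] assms(1,2,3) dominates_pair_commute[of A F p q] by blast
qed

lemma dominates_pair_mono: "A \<subseteq> B \<Longrightarrow> dominates_pair B F p q \<Longrightarrow> dominates_pair A F p q"
  unfolding dominates_pair_def by blast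

lemma reach_in_via_pair:
  assumes sym: "\<And>x y. F x y \<Longrightarrow> F y x"
    and "reach_in A F b y" and "p \<in> A" and "q \<in> A" and "p = q \<or> F p q"
    and "y = p \<or> y = q \<or> F y p \<or> F y q"
    and "z \<in> A" and "z = p \<or> z = q \<or> F z p \<or> F z q"
  shows "reach_in A F b z"
proof -
  have "reach_in A F b p \<or> reach_in A F b q"
    using assms(2-4,6) reach_in.step sym by metis
  then have "reach_in A F b p \<and> reach_in A F b q"
    using assms(3-5) reach_in.step sym by metis
  then show ?thesis using assms(7,8) reach_in.step sym by metis
qed

lemma isolated_if_pair_dominates:
  assumes sym: "\<And>x y. F x y \<Longrightarrow> F y x" and irr: "\<And>x. \<not> F x x"
    and disconnected: "\<not> connected_in A F"
    and "p \<in> A" and "q \<in> A" and "p = q \<or> F p q"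
    and dom: "dominates_pair (A - {c}) F p q"
  shows "c \<in> A" and "\<And>y. y \<in> A \<Longrightarrow> \<not> F c y"
proof -
  have reach: "reach_in A F p y" if "y \<in> A" "y \<noteq> c" for y
    using reach_in_via_pair[OF sym reach_in.refl[of p A F] assms(4-6)] dominates_pairD[OF dom] that
      assms(4) by blast
  show "c \<in> A"
    using connected_inI[of p A F] assms(4) sym reach disconnected by blast
  show "\<not> F c y" if "y \<in> A" for y
  proof
    assume "F c y"
    then have "reach_in A F p c"
      using reach that \<open>c \<in> A\<close> irr sym reach_in.step by metis
    then show False
      using connected_inI[of p A F] assms(4) sym reach disconnected by blast
  qed
qed

lemma connected_in_pair:
  assumes "p = q \<or> F p q" and "\<And>x y. F x y \<Longrightarrow> F y x"
  shows "connected_in {p, q} F"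
  using assms reach_in_edge[of _ "{p, q}"] reach_in.refl[of _ "{p, q}"]
  unfolding connected_in_def by (metis insert_iff insert_not_empty singletonD)

lemma gamma_c_le_card: "connected_dominating_set A F D \<Longrightarrow> gamma_c A F \<le> card D"
  unfolding gamma_c_def by (rule Least_le) blast

lemma gamma_c_attained:
  "connected_dominating_set A F D \<Longrightarrow> \<exists>D'. connected_dominating_set A F D' \<and> card D' = gamma_c A F"
  unfolding gamma_c_def by (rule LeastI_ex) blast

lemma gamma_c_le_2I:
  assumes "p \<in> A" and "q \<in> A" and "p = q \<or> F p q" and "\<And>x y. F x y \<Longrightarrow> F y x"
    and "dominates_pair A F p q"
  shows "gamma_c A F \<le> 2"
proof -
  have "connected_dominating_set A F {p, q}"
    using assms connected_in_pair[of p q F]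
    unfolding connected_dominating_set_def dominates_pair_def by blast
  then have "gamma_c A F \<le> card {p, q}" by (rule gamma_c_le_card)
  also have "\<dots> \<le> 2" by (simp add: card_insert_le_m1)
  finally show ?thesis .
qed

lemma gamma_c_less_3E:
  assumes "finite A" and "connected_in A F" and "gamma_c A F < 3" and sym: "\<And>x y. F x y \<Longrightarrow> F y x"
  obtains p q where "p \<in> A" and "q \<in> A" and "p = q \<or> F p q" and "dominates_pair A F p q"
proof -
  have "connected_dominating_set A F A"
    using assms(2) unfolding connected_dominating_set_def by blast
  then obtain D where D: "connected_dominating_set A F D" and "card D < 3"
    using gamma_c_attained assms(3) by metis
  moreover have "finite D" and "D \<noteq> {}"
    using D assms(1) finite_subset unfolding connected_dominating_set_def connected_in_def by auto
  ultimately have "card D = 1 \<or> card D = 2"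
    by (simp add: card_gt_0_iff less_Suc_eq numeral_3_eq_3 numeral_2_eq_2)
  then obtain p q where "D = {p, q}" and "p = q \<or> F p q"
  proof
    assume "card D = 1"
    then show thesis using that by (metis card_1_singletonE insert_absorb2)
  next
    assume "card D = 2"
    then obtain p q where D_eq: "D = {p, q}" and "p \<noteq> q"
      by (meson card_2_iff)
    then have "reach_in D F p q"
      using D unfolding connected_dominating_set_def connected_in_def by blast
    then have "F p q"
      using reach_in_doubleton[of p q F p q] D_eq \<open>p \<noteq> q\<close> sym by blast
    then show thesis using that D_eq by blast
  qed
  then show thesis
    using that D unfolding connected_dominating_set_def dominates_pair_def by blast
qed

lemma exists_other_if_card_ge_2:
  assumes "2 \<le> card S"
  shows "\<exists>s'\<in>S. s' \<noteq> s"
proof (rule ccontr)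
  assume "\<not> (\<exists>s'\<in>S. s' \<noteq> s)"
  then have "card S \<le> card {s}"
    by (intro card_mono) auto
  then show False
    using assms by simp
qed

lemma card_Diff_less_swap:
  assumes "finite A" and "finite B" and "card A < card B"
  shows "card (A - B) < card (B - A)"
  using assms card_Int_Diff[of A B] card_Int_Diff[of B A] by (simp add: Int_commute)

lemma independent_setD:
  assumes "independent_set V E I"
  shows "I \<subseteq> V" and "u \<in> I \<Longrightarrow> v \<in> I \<Longrightarrow> \<not> E u v"
  using assms unfolding independent_set_def by blast+

lemma separating_setD:
  assumes "separating_set V E S"
  shows "S \<subseteq> V" and "\<not> connected_in (V - S) E"
  using assms unfolding separating_set_def by blast+

lemma connectivity_le_card: "separating_set V E S \<Longrightarrow> connectivity V E \<le> card S"
  unfolding connectivity_def by (auto intro: Least_le)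

lemma connectivity_attained:
  "separating_set V E S \<Longrightarrow> \<exists>S'. separating_set V E S' \<and> card S' = connectivity V E"
  unfolding connectivity_def
  using LeastI_ex[of "\<lambda>k. \<exists>S. separating_set V E S \<and> card S = k"] by auto

lemma independence_number_le:
  assumes "finite V" and "\<And>I. independent_set V E I \<Longrightarrow> card I \<le> k"
  shows "independence_number V E \<le> k"
proof -
  have "{card I | I. independent_set V E I} \<subseteq> card ` Pow V"
    unfolding independent_set_def by blast
  then have "finite {card I | I. independent_set V E I}"
    using assms(1) finite_subset by blast
  moreover have "independent_set V E {}"
    unfolding independent_set_def by simp
  ultimately show ?thesis
    unfolding independence_number_def using assms(2) by (subst Max_le_iff) auto
qed

section \<open>Maximal \<open>3\<close>-\<open>\<gamma>\<^sub>c\<close>-vertex critical graphs\<close>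

text \<open>\<open>arrow V E a x b\<close> is the relation written \<open>[a, x] \<mapsto> b\<close> in the literature on
  \<open>\<gamma>\<^sub>c\<close>-critical graphs.\<close>
definition arrow :: "'a set \<Rightarrow> ('a \<Rightarrow> 'a \<Rightarrow> bool) \<Rightarrow> 'a \<Rightarrow> 'a \<Rightarrow> 'a \<Rightarrow> bool" where
  "arrow V E a x b \<longleftrightarrow> x \<in> V \<and> E a x \<and> x \<noteq> b \<and> \<not> E x b \<and> dominates_pair (V - {b}) E a x"

definition only_misses :: "('a \<Rightarrow> 'a \<Rightarrow> bool) \<Rightarrow> 'a set \<Rightarrow> 'a set \<Rightarrow> 'a \<Rightarrow> 'a set" where
  "only_misses E I T c = {x \<in> T. \<not> E x c \<and> (\<forall>i\<in>I - {c}. E x i)}"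

lemma only_misses_unique:
  "x \<in> only_misses E I T c \<Longrightarrow> x \<in> only_misses E I T' c' \<Longrightarrow> c \<in> I \<Longrightarrow> c' \<in> I \<Longrightarrow> c = c'"
  unfolding only_misses_def by blast

locale max_3_critical =
  fixes V :: "'a set" and E :: "'a \<Rightarrow> 'a \<Rightarrow> bool"
  assumes simple: "simple_graph V E"
    and connected: "connected_in V E"
    and critical: "maximal_vertex_critical 3 V E"
begin

lemma finite_V: "finite V"
  using simple unfolding simple_graph_def by blast

lemma edge_in_V: "E u v \<Longrightarrow> u \<in> V \<and> v \<in> V"
  using simple unfolding simple_graph_def by blast

lemma sym: "E u v \<Longrightarrow> E v u"
  using simple unfolding simple_graph_def by blast

lemma irrefl: "\<not> E v v"
  using simple unfolding simple_graph_def by blast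

abbreviation arrow_comparable :: "'a \<Rightarrow> 'a \<Rightarrow> bool" where
  "arrow_comparable a b \<equiv> (\<exists>x. arrow V E a x b) \<or> (\<exists>x. arrow V E b x a)"

lemma no_dominating_pair:
  assumes "p \<in> V" and "q \<in> V" and "p = q \<or> E p q"
  shows "\<not> dominates_pair V E p q"
  using gamma_c_le_2I[of p V q E] assms sym critical
  unfolding maximal_vertex_critical_def vertex_critical_def by fastforce

lemma exists_non_nbr: "d \<in> V \<Longrightarrow> \<exists>y\<in>V. y \<noteq> d \<and> \<not> E y d"
  using no_dominating_pair[of d d] unfolding dominates_pair_def by blast

lemma card_separating_ge_2: "separating_set V E S \<Longrightarrow> 2 \<le> card S"
  using connectivity_le_card[of V E S] critical
  unfolding maximal_vertex_critical_def vertex_critical_def by linarith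

lemma connected_delete_vertex:
  assumes "u \<in> V"
  shows "connected_in (V - {u}) E"
proof (rule ccontr)
  assume "\<not> connected_in (V - {u}) E"
  moreover have "V - {u} \<noteq> {}"
    using exists_non_nbr[OF assms] by blast
  ultimately have "separating_set V E {u}"
    unfolding separating_set_def using assms by blast
  then show False
    using card_separating_ge_2 by fastforce
qed

lemma separating_nbrs:
  assumes "v \<in> V"
  shows "separating_set V E {u. E v u}"
proof -
  obtain y where y: "y \<in> V" "y \<noteq> v" "\<not> E y v"
    using exists_non_nbr[OF assms] by blast
  have "\<not> reach_in (V - {u. E v u}) E v y"
    using reach_in_from_isolated[of _ E v y] y(2) by blast
  moreover have "v \<in> V - {u. E v u}" and "y \<in> V - {u. E v u}"
    using assms y irrefl sym by auto
  ultimately show ?thesis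
    unfolding separating_set_def connected_in_def using edge_in_V by blast
qed

lemma card_nbrs_ge_2: "v \<in> V \<Longrightarrow> 2 \<le> card {u. E v u}"
  using card_separating_ge_2 separating_nbrs by blast

lemma arrowI:
  assumes "b \<in> V" and "x \<in> V" and "E a x" and "x \<noteq> b" and dom: "dominates_pair (V - {b}) E a x"
  shows "arrow V E a x b"
proof -
  have "\<not> E x b"
  proof
    assume "E x b"
    then have "dominates_pair V E a x"
      using dom sym unfolding dominates_pair_def by blast
    then show False
      using no_dominating_pair assms(2,3) edge_in_V by blast
  qed
  then show ?thesis
    unfolding arrow_def using assms by blast
qed

lemma add_edge_dominating_pair:
  assumes "a \<in> V" and "b \<in> V" and "a \<noteq> b" and "\<not> E a b" and "x \<in> V"
    and "a = x \<or> add_edge E a b a x" and dom: "dominates_pair V (add_edge E a b) a x"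
  shows "dominates_pair V E a b \<or> (\<exists>x. arrow V E a x b)"
proof -
  have dom_E: "dominates_pair (V - {b}) E a x" if "x \<noteq> b"
    using dom that unfolding dominates_pair_def add_edge_def by blast
  consider "x = b" | "x = a" | "x \<noteq> a" "x \<noteq> b" by blast
  then show ?thesis
  proof cases
    case 1
    then show ?thesis
      using dom unfolding dominates_pair_def add_edge_def by blast
  next
    case 2
    have "V \<noteq> {a, b}"
      using connected reach_in_doubleton[of a b E a b] assms(1-4) sym
      unfolding connected_in_def by blast
    then obtain x' where x': "x' \<in> V" "x' \<noteq> a" "x' \<noteq> b"
      using assms(1,2) by blast
    then have "dominates_pair (V - {b}) E a x'" and "E a x'"
      using dom_E 2 sym assms(3) unfolding dominates_pair_def by blast+
    then show ?thesis
      using arrowI[OF assms(2) x'(1)] x'(3) by blast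
  next
    case 3
    then have "E a x"
      using assms(6) unfolding add_edge_def by blast
    then show ?thesis
      using arrowI[OF assms(2,5)] dom_E 3 by blast
  qed
qed

lemma nonadjacent_pair_cases:
  assumes "a \<in> V" and "b \<in> V" and "a \<noteq> b" and "\<not> E a b"
  shows "dominates_pair V E a b \<or> (\<exists>x. arrow V E a x b) \<or> (\<exists>x. arrow V E b x a)"
proof -
  let ?F = "add_edge E a b"
  have F_sym: "?F x y \<Longrightarrow> ?F y x" for x y
    using sym unfolding add_edge_def by blast
  have conn: "connected_in V ?F"
    by (rule connected_in_mono[OF connected]) (simp add: add_edge_def)
  have less: "gamma_c V ?F < 3"
    using critical assms unfolding maximal_vertex_critical_def edge_critical_def by blast
  obtain p q where pq: "p \<in> V" "q \<in> V" "p = q \<or> ?F p q"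
    and dom: "dominates_pair V ?F p q"
    by (rule gamma_c_less_3E[OF finite_V conn less F_sym])
  have F_swap: "?F = add_edge E b a"
    unfolding add_edge_def by blast
  consider "a \<in> {p, q}" | "b \<in> {p, q}" | "a \<notin> {p, q}" "b \<notin> {p, q}" by blast
  then show ?thesis
  proof cases
    case 1
    then obtain x where "x \<in> V" "a = x \<or> ?F a x" "dominates_pair V ?F a x"
      using dominating_pair_through[OF pq(3) F_sym dom] pq(1,2) by blast
    then show ?thesis
      using add_edge_dominating_pair[OF assms] by blast
  next
    case 2
    then obtain x where "x \<in> V" "b = x \<or> ?F b x" "dominates_pair V ?F b x"
      using dominating_pair_through[OF pq(3) F_sym dom] pq(1,2) by blast
    then have "x \<in> V" "b = x \<or> add_edge E b a b x" "dominates_pair V (add_edge E b a) b x"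
      by (simp_all only: F_swap)
    then show ?thesis
      using add_edge_dominating_pair[OF assms(2,1)] assms(3,4) sym dominates_pair_commute[of V E a b]
      by metis
  next
    case 3
    then have "p = q \<or> E p q" and "dominates_pair V E p q"
      using pq dom unfolding dominates_pair_def add_edge_def by auto
    then show ?thesis
      using no_dominating_pair pq(1,2) by blast
  qed
qed

lemma vertex_deletion_pair:
  assumes "u \<in> V"
  obtains p q where "p \<in> V" and "q \<in> V" and "p \<noteq> u" and "q \<noteq> u" and "p = q \<or> E p q"
    and "\<not> E p u" and "\<not> E q u" and "dominates_pair (V - {u}) E p q"
proof -
  let ?F = "del_vertex E u"
  have F_sym: "?F x y \<Longrightarrow> ?F y x" for x y
    using sym unfolding del_vertex_def by blast
  have conn: "connected_in (V - {u}) ?F"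
    by (rule connected_in_mono[OF connected_delete_vertex[OF assms]]) (simp add: del_vertex_def)
  have less: "gamma_c (V - {u}) ?F < 3"
    using critical assms unfolding maximal_vertex_critical_def vertex_critical_def by blast
  have fin: "finite (V - {u})"
    using finite_V by blast
  obtain p q where pq: "p \<in> V - {u}" "q \<in> V - {u}" "p = q \<or> ?F p q"
    and dom_F: "dominates_pair (V - {u}) ?F p q"
    by (rule gamma_c_less_3E[OF fin conn less F_sym])
  then have pq_E: "p = q \<or> E p q" and dom: "dominates_pair (V - {u}) E p q"
    unfolding del_vertex_def dominates_pair_def by auto
  have "\<not> E p u" and "\<not> E q u"
    using no_dominating_pair[of p q] pq pq_E dom sym unfolding dominates_pair_def by blast+
  then show thesis
    using that pq pq_E dom by blast
qed

lemma arrow_or_arrow: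
  assumes "a \<in> V" and "b \<in> V" and "a \<noteq> b" and "\<not> E a b"
    and "z \<in> V" and "z \<noteq> a" and "z \<noteq> b" and "\<not> E z a" and "\<not> E z b"
  shows "arrow_comparable a b"
  using nonadjacent_pair_cases[OF assms(1-4)] assms(5-9) unfolding dominates_pair_def by blast

lemma arrow_witness_nbrs:
  assumes "independent_set V E I" and "a \<in> I" and "b \<in> I" and "a \<noteq> b" and "arrow V E a x b"
  shows "x \<notin> I" and "\<forall>i\<in>I - {b}. E x i"
proof -
  have "E a x" and dom: "dominates_pair (V - {b}) E a x"
    using assms(5) unfolding arrow_def by blast+
  moreover have I: "I \<subseteq> V" "\<And>u v. u \<in> I \<Longrightarrow> v \<in> I \<Longrightarrow> \<not> E u v"
    using assms(1) unfolding independent_set_def by blast+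
  ultimately show "x \<notin> I"
    using assms(2) by blast
  then show "\<forall>i\<in>I - {b}. E x i"
    using dominates_pairD[OF dom] I assms(2) \<open>E a x\<close> sym by blast
qed

lemma closed_nbhd_not_subset:
  assumes "E u w" and "\<And>y. E u y \<Longrightarrow> y = w \<or> E w y"
  shows False
proof -
  obtain p q where pq: "p \<noteq> w" "q \<noteq> w" "\<not> E p w" "\<not> E q w"
    and dom: "dominates_pair (V - {w}) E p q"
    using vertex_deletion_pair edge_in_V[OF assms(1)] by metis
  have "u \<in> V - {w}"
    using assms(1) edge_in_V irrefl by blast
  then have "u = p \<or> u = q \<or> E u p \<or> E u q"
    by (rule dominates_pairD[OF dom])
  then show False
    using assms pq sym by blast
qed

subsection \<open>Counting arrow witnesses\<close>

lemma arrow_witness_adjacent: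
  assumes "arrow V E a x b" and "v \<in> V - {a, b}" and "\<not> E v a"
  shows "E v x"
proof -
  have "E a x" and dom: "dominates_pair (V - {b}) E a x"
    using assms(1) unfolding arrow_def by blast+
  moreover have "v \<noteq> x"
    using \<open>E a x\<close> assms(3) sym by blast
  ultimately show ?thesis
    using dominates_pairD[OF dom, of v] assms(2,3) by blast
qed

lemma pairwise_comparable_common_non_nbr:
  assumes "independent_set V E I" and "W \<subseteq> I" and "z \<in> V" and "\<forall>c\<in>W. z \<noteq> c \<and> \<not> E z c"
  shows "pairwise arrow_comparable W"
proof (rule pairwiseI)
  fix a b
  assume "a \<in> W" "b \<in> W" "a \<noteq> b"
  then show "arrow_comparable a b"
    using arrow_or_arrow[of a b z] assms independent_setD[OF assms(1)] sym by blast
qed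

lemma common_non_nbr_witnesses:
  assumes "independent_set V E I" and "W \<subseteq> I" and "z \<in> V" and "\<forall>c\<in>W. z \<noteq> c \<and> \<not> E z c"
  shows "pairwise (\<lambda>a b. {x. arrow V E a x b} \<subseteq> {u. E z u} - I) W"
proof (rule pairwiseI, rule subsetI)
  fix a b x
  assume ab: "a \<in> W" "b \<in> W" "a \<noteq> b" and "x \<in> {x. arrow V E a x b}"
  then have arrow: "arrow V E a x b"
    by blast
  have "E z x"
    using arrow_witness_adjacent[OF arrow] ab assms(3,4) by blast
  then show "x \<in> {u. E z u} - I"
    using arrow_witness_nbrs(1)[OF assms(1) _ _ ab(3) arrow] ab assms(2) by blast
qed

context
  fixes I W T :: "'a set"
  assumes independent: "independent_set V E I" and W_subset: "W \<subseteq> I"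
    and comparable: "pairwise arrow_comparable W"
    and witnesses_in: "pairwise (\<lambda>a b. {x. arrow V E a x b} \<subseteq> T) W"
begin

lemma arrow_witness_only_misses:
  assumes "a \<in> W" and "b \<in> W" and "a \<noteq> b" and "arrow V E a x b"
  shows "x \<in> only_misses E I T b"
proof -
  have "x \<in> T" and "\<not> E x b"
    using pairwiseD[OF witnesses_in assms(1-3)] assms(4) unfolding arrow_def by blast+
  moreover have "\<forall>i\<in>I - {b}. E x i"
    using arrow_witness_nbrs(2)[OF independent _ _ assms(3,4)] assms(1,2) W_subset by blast
  ultimately show ?thesis
    unfolding only_misses_def by blast
qed

lemma only_misses_empty_unique:
  assumes "c \<in> W" and "c' \<in> W" and "only_misses E I T c = {}" and "only_misses E I T c' = {}"
  shows "c = c'"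
proof (rule ccontr)
  assume "c \<noteq> c'"
  then show False
    using pairwiseD[OF comparable assms(1,2)] arrow_witness_only_misses assms by blast
qed

text \<open>The witness of an arrow from \<open>c\<close> to \<open>c'\<close> misses only \<open>c'\<close>, so it is \<open>g c'\<close>.\<close>
lemma arrow_choice_edge:
  assumes "W' \<subseteq> W" and T_subset: "T \<subseteq> V - I" and onto: "T \<subseteq> g ` W'"
    and g: "\<forall>c\<in>W'. g c \<in> T \<and> \<not> E (g c) c"
    and "c \<in> W'" and "c' \<in> W'" and "g c \<noteq> g c'" and arrow: "arrow V E c x c'"
  shows "E (g c) (g c')"
proof -
  have "c \<noteq> c'" and "c \<in> I" and "c' \<in> I"
    using assms(1,5-7) W_subset by auto
  then have x: "x \<in> only_misses E I T c'"
    using arrow_witness_only_misses assms(1,5,6) arrow by blast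
  then obtain e where "e \<in> W'" and "x = g e"
    using onto unfolding only_misses_def by blast
  then have "x = g c'"
    using x g assms(1) W_subset unfolding only_misses_def by blast
  moreover have "g c \<in> V - {c'}" and "g c \<noteq> c" and "\<not> E (g c) c"
    using g assms(5) T_subset \<open>c \<in> I\<close> \<open>c' \<in> I\<close> by auto
  moreover have "dominates_pair (V - {c'}) E c x"
    using arrow unfolding arrow_def by blast
  ultimately show ?thesis
    using dominates_pairD assms(7) by metis
qed

lemma clique_of_choice:
  assumes "W' \<subseteq> W" and "T \<subseteq> V - I" and "T \<subseteq> g ` W'" and "\<forall>c\<in>W'. g c \<in> T \<and> \<not> E (g c) c"
    and "s \<in> T" and "t \<in> T" and "s \<noteq> t"
  shows "E s t"
proof -
  obtain c c' where cc': "c \<in> W'" "c' \<in> W'" and st: "s = g c" "t = g c'"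
    using assms(3,5,6) by blast
  then have "c \<noteq> c'" and "c \<in> W" and "c' \<in> W"
    using assms(1,7) by auto
  then consider x where "arrow V E c x c'" | x where "arrow V E c' x c"
    using pairwiseD[OF comparable] by blast
  then show ?thesis
  proof cases
    case 1
    then show ?thesis
      using arrow_choice_edge[OF assms(1-4) cc'] st assms(7) by blast
  next
    case 2
    then show ?thesis
      using arrow_choice_edge[OF assms(1-4) cc'(2,1)] st assms(7) sym by metis
  qed
qed

lemma inj_on_choice:
  assumes g_choice: "\<forall>c\<in>W. \<not> E (g c) c \<and> (only_misses E I T c \<noteq> {} \<longrightarrow> g c \<in> only_misses E I T c)"
  shows "inj_on g W"
proof (rule inj_onI)
  fix c c'
  assume c: "c \<in> W" "c' \<in> W" and "g c = g c'"
  have not_in: "g c \<notin> only_misses E I T c" if "c \<noteq> c'" "c' \<in> W" "g c = g c'" for c c'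
  proof
    assume "g c \<in> only_misses E I T c"
    then have "E (g c) c'"
      using that(1,2) W_subset unfolding only_misses_def by blast
    then show False
      using g_choice that(2,3) by simp
  qed
  show "c = c'"
  proof (rule ccontr)
    assume "c \<noteq> c'"
    then have "only_misses E I T c = {}" and "only_misses E I T c' = {}"
      using not_in[of c c'] not_in[of c' c] g_choice c \<open>g c = g c'\<close> by metis+
    then show False
      using only_misses_empty_unique[OF c] \<open>c \<noteq> c'\<close> by blast
  qed
qed

lemma finite_W: "finite W"
  using W_subset independent_setD(1)[OF independent] finite_V by (meson finite_subset subset_trans)

text \<open>The sets \<open>only_misses E I T c\<close> are pairwise disjoint, and at most one of them is empty for
  \<open>c \<in> W\<close>.\<close>
lemma matching_onto:
  assumes "finite T" and "card T < card W"
  obtains c0 g where "c0 \<in> W" and "\<forall>c\<in>W - {c0}. g c \<in> only_misses E I T c"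
    and "T \<subseteq> g ` (W - {c0})"
proof -
  define W' where "W' = {c \<in> W. only_misses E I T c \<noteq> {}}"
  define g where "g c = (SOME x. x \<in> only_misses E I T c)" for c
  have g: "\<forall>c\<in>W'. g c \<in> only_misses E I T c"
    using some_in_eq unfolding W'_def g_def by blast
  have "inj_on g W'"
    using g only_misses_unique W_subset unfolding W'_def inj_on_def
    by (metis (no_types, lifting) mem_Collect_eq subsetD)
  moreover have g_into: "g ` W' \<subseteq> T"
    using g unfolding only_misses_def by blast
  ultimately have "card W' \<le> card T"
    using card_inj_on_le assms(1) by blast
  then have "W' \<noteq> W"
    using assms(2) by auto
  then obtain c0 where c0: "c0 \<in> W - W'"
    unfolding W'_def by blast
  have W'_eq: "W' = W - {c0}"
    using only_misses_empty_unique[of _ c0] c0 unfolding W'_def by blast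
  then have "card (g ` W') = card T"
    using assms(2) c0 card_image[OF \<open>inj_on g W'\<close>] card_mono[OF assms(1) g_into] finite_W by simp
  then have "g ` W' = T"
    by (rule card_subset_eq[OF assms(1) g_into])
  then show thesis
    using that[of c0 g] c0 g W'_eq by blast
qed

lemma clique_if_card_less:
  assumes "finite T" and "card T < card W" and "T \<subseteq> V - I"
  obtains c0 where "c0 \<in> W" and "\<forall>t\<in>T. \<exists>c\<in>W - {c0}. t \<in> only_misses E I T c"
    and "\<forall>s\<in>T. \<forall>t\<in>T. s \<noteq> t \<longrightarrow> E s t"
proof -
  obtain c0 g where c0: "c0 \<in> W" and g: "\<forall>c\<in>W - {c0}. g c \<in> only_misses E I T c"
    and onto: "T \<subseteq> g ` (W - {c0})"
    by (rule matching_onto[OF assms(1,2)])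
  have "\<forall>c\<in>W - {c0}. g c \<in> T \<and> \<not> E (g c) c"
    using g unfolding only_misses_def by blast
  then have "\<forall>s\<in>T. \<forall>t\<in>T. s \<noteq> t \<longrightarrow> E s t"
    using clique_of_choice[OF Diff_subset assms(3) onto] by blast
  moreover have "\<forall>t\<in>T. \<exists>c\<in>W - {c0}. t \<in> only_misses E I T c"
    using onto g by blast
  ultimately show thesis
    using that[OF c0] by blast
qed

lemma choice_onto_if_card_le:
  assumes "finite T" and "card T \<le> card W" and missing: "\<forall>c\<in>W. \<exists>t\<in>T. \<not> E t c"
  obtains g where "\<forall>c\<in>W. g c \<in> T \<and> \<not> E (g c) c" and "T \<subseteq> g ` W"
proof -
  define g where "g c = (if only_misses E I T c \<noteq> {} then SOME x. x \<in> only_misses E I T c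
    else SOME t. t \<in> T \<and> \<not> E t c)" for c
  have g: "g c \<in> T \<and> \<not> E (g c) c \<and> (only_misses E I T c \<noteq> {} \<longrightarrow> g c \<in> only_misses E I T c)"
    if "c \<in> W" for c
  proof (cases "only_misses E I T c = {}")
    case True
    then show ?thesis
      using someI_ex[of "\<lambda>t. t \<in> T \<and> \<not> E t c"] missing that unfolding g_def by auto
  next
    case False
    then have "g c \<in> only_misses E I T c"
      unfolding g_def by (simp add: some_in_eq)
    then show ?thesis
      unfolding only_misses_def by blast
  qed
  then have "inj_on g W"
    using inj_on_choice by blast
  moreover have g_into: "g ` W \<subseteq> T"
    using g by blast
  ultimately have "g ` W = T"
    using card_subset_eq[OF assms(1) g_into] card_image card_mono[OF assms(1) g_into] assms(2)
    by fastforce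
  then show thesis
    using that g by blast
qed

end

subsection \<open>Independence number versus connectivity\<close>

lemma dominating_pair_meets_separating:
  assumes "separating_set V E S" and "t \<in> S" and "p \<in> V" and "q \<in> V" and "p = q \<or> E p q"
    and dom: "dominates_pair (V - {t}) E p q"
  shows "p \<in> S \<or> q \<in> S"
proof (rule ccontr)
  assume "\<not> (p \<in> S \<or> q \<in> S)"
  moreover have "dominates_pair ((V - S) - {t}) E p q"
    by (rule dominates_pair_mono[OF _ dom]) blast
  ultimately have "t \<in> V - S"
    using isolated_if_pair_dominates(1)[of E "V - S" p q t] separating_setD(2)[OF assms(1)] assms(3-5)
      sym irrefl by blast
  then show False
    using assms(2) by blast
qed

context
  fixes S I :: "'a set" and b :: 'a
  assumes separating: "separating_set V E S" and independent: "independent_set V E I"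
    and S_subset: "S \<subseteq> I" and b_in: "b \<in> I" and b_notin: "b \<notin> S"
begin

lemma b_outside: "b \<in> V - S"
  using b_in b_notin independent_setD(1)[OF independent] by blast

lemma nbr_of_b:
  assumes "E b y"
  shows "y \<in> V - S" and "reach_in (V - S) E b y"
proof -
  have "y \<notin> I"
    using independent_setD(2)[OF independent b_in] assms by blast
  then show "y \<in> V - S"
    using S_subset edge_in_V[OF assms] by blast
  then show "reach_in (V - S) E b y"
    using reach_in_edge[of b "V - S" y E] b_outside assms by blast
qed

lemma arrow_into_b:
  assumes "s \<in> S"
  obtains x where "arrow V E s x b"
proof -
  obtain s' where s': "s' \<in> S" "s' \<noteq> s"
    using exists_other_if_card_ge_2[OF card_separating_ge_2[OF separating]] by blast
  have "s \<in> I" "s' \<in> I"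
    using assms s' S_subset by blast+
  then have "(\<exists>x. arrow V E s x b) \<or> (\<exists>x. arrow V E b x s)"
    using arrow_or_arrow[of s b s'] b_in b_notin assms s' independent_setD[OF independent] by blast
  moreover have "\<not> arrow V E b x s" for x
  proof
    assume arrow: "arrow V E b x s"
    then have "x \<notin> S" and "x \<in> V" and "E b x" and "dominates_pair (V - {s}) E b x"
      using arrow_witness_nbrs(1)[OF independent b_in \<open>s \<in> I\<close>] b_notin assms S_subset
      unfolding arrow_def by blast+
    then show False
      using dominating_pair_meets_separating[OF separating assms] b_outside b_notin by blast
  qed
  ultimately show thesis
    using that by blast
qed

context
  fixes d :: 'a
  assumes d_outside: "d \<in> V - S" and d_unreachable: "\<not> reach_in (V - S) E b d"
begin

lemma b_not_near_d: "b \<noteq> d" "\<not> E b d"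
  using d_unreachable nbr_of_b(2) reach_in.refl[OF b_outside] by blast+

lemma no_arrow_S_to_d:
  assumes "s \<in> S"
  shows "\<not> arrow V E s y d"
proof
  assume arrow: "arrow V E s y d"
  then have "E s y" and dom: "dominates_pair (V - {d}) E s y"
    unfolding arrow_def by blast+
  have "s \<in> I"
    using assms S_subset by blast
  then have "E b y"
    using dominates_pairD[OF dom, of b] b_outside b_not_near_d b_notin assms \<open>E s y\<close>
      independent_setD(2)[OF independent] b_in sym by blast
  then have y: "y \<in> V - S" "reach_in (V - S) E b y"
    by (rule nbr_of_b)+
  have S_nbrs: "E s' y" if "s' \<in> S" for s'
    using dominates_pairD[OF dom, of s'] that \<open>s \<in> I\<close> separating_setD(1)[OF separating] d_outside y(1) \<open>E s y\<close>
      S_subset independent_setD(2)[OF independent] sym by blast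
  obtain p q where "p \<in> V" "q \<in> V" "p = q \<or> E p q" "\<not> E p y" "\<not> E q y"
    and dom_y: "dominates_pair (V - {y}) E p q"
    using vertex_deletion_pair y(1) by blast
  moreover have "p \<notin> S" and "q \<notin> S"
    using S_nbrs \<open>\<not> E p y\<close> \<open>\<not> E q y\<close> by blast+
  moreover have "b \<noteq> y" and "d \<noteq> y"
    using \<open>E b y\<close> irrefl y(2) d_unreachable by blast+
  ultimately have "reach_in (V - S) E b d"
    using reach_in_via_pair[of E "V - S" b b p q d] sym reach_in.refl[OF b_outside]
      dominates_pairD[OF dom_y, of b] dominates_pairD[OF dom_y, of d] b_outside d_outside by blast
  then show False
    using d_unreachable by blast
qed

lemma no_arrow_d_to_S:
  assumes "s \<in> S"
  shows "\<not> arrow V E d y s"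
proof
  assume arrow: "arrow V E d y s"
  then have "E d y" and dom: "dominates_pair (V - {s}) E d y"
    unfolding arrow_def by blast+
  then have "E b y"
    using dominates_pairD[OF dom, of b] b_outside b_notin assms b_not_near_d sym by blast
  then have "reach_in (V - S) E b d"
    using reach_in.step[OF nbr_of_b(2) sym d_outside] \<open>E d y\<close> by blast
  then show False
    using d_unreachable by blast
qed

lemma S_adjacent_d:
  assumes "s \<in> S"
  shows "E s d"
proof (rule ccontr)
  assume "\<not> E s d"
  moreover have "s \<in> V" and "s \<noteq> d"
    using assms separating_setD(1)[OF separating] d_outside by blast+
  ultimately have "dominates_pair V E s d"
    using nonadjacent_pair_cases[of s d] d_outside no_arrow_S_to_d no_arrow_d_to_S assms by blast
  moreover have "s \<in> I"
    using assms S_subset by blast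
  ultimately show False
    using dominates_pairD[of V E s d b] b_outside b_not_near_d b_notin assms b_in
      independent_setD(2)[OF independent] by blast
qed

lemma reach_all_but_d:
  assumes "y \<in> V - S" and "y \<noteq> d"
  shows "reach_in (V - S) E b y"
proof -
  obtain p q where "p \<in> V" "q \<in> V" "p = q \<or> E p q" "\<not> E p d" "\<not> E q d"
    and dom: "dominates_pair (V - {d}) E p q"
    using vertex_deletion_pair d_outside by blast
  moreover have "p \<notin> S" and "q \<notin> S"
    using S_adjacent_d \<open>\<not> E p d\<close> \<open>\<not> E q d\<close> by blast+
  ultimately show ?thesis
    using reach_in_via_pair[of E "V - S" b b p q y] sym reach_in.refl[OF b_outside]
      dominates_pairD[OF dom, of b] dominates_pairD[OF dom, of y] b_outside b_not_near_d assms by blast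
qed

lemma nbrs_d_in_S: "E d u \<Longrightarrow> u \<in> S"
  using reach_all_but_d[of u] reach_in.step[of "V - S" E b u d] d_outside d_unreachable edge_in_V
    irrefl sym by blast

lemma S_vertex_misses:
  assumes "s \<in> S"
  shows "\<exists>y\<in>V - S. y \<noteq> b \<and> y \<noteq> d \<and> \<not> E s y"
proof (rule ccontr)
  assume "\<not> ?thesis"
  then have b_nbrs: "E s z" if "E b z" for z
    using nbr_of_b(1)[OF that] that irrefl[of b] b_not_near_d by auto
  obtain p q where "p \<noteq> s" "q \<noteq> s" "p = q \<or> E p q" "\<not> E p s" "\<not> E q s"
    and dom: "dominates_pair (V - {s}) E p q"
    using vertex_deletion_pair assms separating_setD(1)[OF separating] by blast
  moreover have "b = p \<or> b = q \<or> E b p \<or> E b q"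
    using dominates_pairD[OF dom] b_outside assms by blast
  ultimately have "p = b" and "q = b"
    using b_nbrs sym by blast+
  moreover have "d = p \<or> d = q \<or> E d p \<or> E d q"
    using dominates_pairD[OF dom] d_outside assms by blast
  ultimately show False
    using b_not_near_d sym by blast
qed

lemma not_dominating_b_d: "\<not> dominates_pair V E b d"
proof
  assume dom: "dominates_pair V E b d"
  obtain s where "s \<in> S"
    using card_separating_ge_2[OF separating] by fastforce
  then obtain x where arrow: "arrow V E s x b"
    by (rule arrow_into_b)
  have "s \<in> I"
    using \<open>s \<in> S\<close> S_subset by blast
  then have "x \<notin> S"
    using arrow_witness_nbrs(1)[OF independent _ b_in _ arrow] b_notin \<open>s \<in> S\<close> S_subset by blast
  moreover have "x \<in> V" "x \<noteq> b" "\<not> E x b"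
    using arrow unfolding arrow_def by blast+
  ultimately have "x = d"
    using dominates_pairD[OF dom, of x] nbrs_d_in_S sym by blast
  then have dom_s: "dominates_pair (V - {b}) E s d"
    using arrow unfolding arrow_def by blast
  have "E s y" if "y \<in> V - S" "y \<noteq> b" "y \<noteq> d" for y
    using dominates_pairD[OF dom_s, of y] that \<open>s \<in> S\<close> nbrs_d_in_S sym by blast
  then show False
    using S_vertex_misses[OF \<open>s \<in> S\<close>] by blast
qed

lemma no_arrow_b_d: "\<not> arrow V E b z d"
proof
  assume arrow: "arrow V E b z d"
  then have "E b z" and "z \<noteq> d" and dom: "dominates_pair (V - {d}) E b z"
    unfolding arrow_def by blast+
  have "z \<in> V - S"
    using nbr_of_b(1)[OF \<open>E b z\<close>] .
  have S_nbrs: "E s z" if "s \<in> S" for s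
    using dominates_pairD[OF dom, of s] that separating_setD(1)[OF separating] d_outside \<open>z \<in> V - S\<close> b_notin
      S_subset b_in independent_setD(2)[OF independent] sym by blast
  obtain p q where "p = q \<or> E p q" "\<not> E p z" "\<not> E q z"
    and dom_z: "dominates_pair (V - {z}) E p q"
    using vertex_deletion_pair \<open>z \<in> V - S\<close> by blast
  moreover have "p \<notin> S" and "q \<notin> S"
    using S_nbrs \<open>\<not> E p z\<close> \<open>\<not> E q z\<close> by blast+
  moreover have "d = p \<or> d = q \<or> E d p \<or> E d q"
    using dominates_pairD[OF dom_z] d_outside \<open>z \<noteq> d\<close> by blast
  ultimately have "p = d" and "q = d"
    using nbrs_d_in_S sym by blast+
  moreover have "b = p \<or> b = q \<or> E b p \<or> E b q"
    using dominates_pairD[OF dom_z] b_outside \<open>E b z\<close> irrefl by blast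
  ultimately show False
    using b_not_near_d by blast
qed

lemma no_arrow_d_b: "\<not> arrow V E d y b"
proof
  assume arrow: "arrow V E d y b"
  then have "y \<in> S" and dom: "dominates_pair (V - {b}) E d y"
    using nbrs_d_in_S unfolding arrow_def by blast+
  have "E y z" if "z \<in> V - S" "z \<noteq> b" "z \<noteq> d" for z
    using dominates_pairD[OF dom, of z] that \<open>y \<in> S\<close> nbrs_d_in_S sym by blast
  then show False
    using S_vertex_misses[OF \<open>y \<in> S\<close>] by blast
qed

lemma unreachable_impossible: False
  using nonadjacent_pair_cases[of b d] b_outside d_outside b_not_near_d
    not_dominating_b_d no_arrow_b_d no_arrow_d_b by blast

end

end

lemma separating_subset_independent:
  assumes "separating_set V E S" and "independent_set V E I" and "S \<subseteq> I"
  shows "I \<subseteq> S"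
proof
  fix b
  assume "b \<in> I"
  show "b \<in> S"
  proof (rule ccontr)
    assume "b \<notin> S"
    note setting = assms \<open>b \<in> I\<close> this
    obtain d where "d \<in> V - S" and "\<not> reach_in (V - S) E b d"
      using not_connected_in_unreachable[OF separating_setD(2)[OF assms(1)] b_outside[OF setting]]
        sym by blast
    then show False
      by (rule unreachable_impossible[OF setting])
  qed
qed

lemma nbrs_not_subset_nbrs:
  assumes "v \<in> V" and "c \<in> V" and "v \<noteq> c" and "\<not> E v c"
    and "w \<in> V" and "w \<noteq> v" and "w \<noteq> c" and "\<not> E w v"
  shows "\<exists>t. E v t \<and> \<not> E t c"
proof (rule ccontr)
  assume "\<not> ?thesis"
  then have v_nbrs: "E t c" if "E v t" for t
    using that by blast
  obtain p q where "p \<noteq> c" "q \<noteq> c" "p = q \<or> E p q" "\<not> E p c" "\<not> E q c"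
    and dom: "dominates_pair (V - {c}) E p q"
    using vertex_deletion_pair assms(2) by blast
  moreover have "v = p \<or> v = q \<or> E v p \<or> E v q"
    using dominates_pairD[OF dom] assms(1-3) by blast
  ultimately have "p = v" and "q = v"
    using v_nbrs sym assms(4) by blast+
  then show False
    using dominates_pairD[OF dom, of w] assms(5-8) by blast
qed

lemma independent_card_le_degree_outside:
  assumes "v \<in> V" and independent: "independent_set V E I" and "v \<notin> I"
  shows "card I \<le> card {u. E v u}"
proof (rule ccontr)
  define N where "N = {u. E v u}"
  assume "\<not> card I \<le> card {u. E v u}"
  moreover have "N \<subseteq> V"
    using edge_in_V unfolding N_def by blast
  moreover have "finite N" and "finite I"
    using calculation(2) independent_setD(1)[OF independent] finite_V finite_subset by blast+
  ultimately have card_less: "card (N - I) < card (I - N)"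
    using card_Diff_less_swap[of N I] unfolding N_def by linarith
  have comparable: "pairwise arrow_comparable (I - N)"
    using pairwise_comparable_common_non_nbr[OF independent Diff_subset assms(1)] \<open>v \<notin> I\<close>
    unfolding N_def by blast
  have witnesses_in: "pairwise (\<lambda>a b. {x. arrow V E a x b} \<subseteq> N - I) (I - N)"
    using common_non_nbr_witnesses[OF independent Diff_subset assms(1)] \<open>v \<notin> I\<close>
    unfolding N_def by blast
  have fin: "finite (N - I)" and sub: "N - I \<subseteq> V - I"
    using \<open>finite N\<close> \<open>N \<subseteq> V\<close> by blast+
  obtain c0 where "c0 \<in> I - N"
    and misses: "\<forall>t\<in>N - I. \<exists>c\<in>I - N - {c0}. t \<in> only_misses E I (N - I) c"
    and clique: "\<forall>s\<in>N - I. \<forall>t\<in>N - I. s \<noteq> t \<longrightarrow> E s t"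
    by (rule clique_if_card_less[OF independent Diff_subset comparable witnesses_in fin card_less sub])
  have "N - I \<noteq> {}"
    using separating_subset_independent[OF separating_nbrs[OF assms(1)] independent] card_less
    unfolding N_def by fastforce
  then obtain t where "t \<in> N - I"
    by blast
  obtain c where c: "c \<in> I - N" and t_nbrs: "\<forall>i\<in>I - {c}. E t i"
    using misses \<open>t \<in> N - I\<close> unfolding only_misses_def by blast
  have "E t y" if "E v y" and "y \<noteq> t" for y
  proof (cases "y \<in> I")
    case True
    then show ?thesis
      using t_nbrs c that(1) unfolding N_def by blast
  next
    case False
    then have "y \<in> N - I"
      using that(1) unfolding N_def by blast
    then show ?thesis
      using clique \<open>t \<in> N - I\<close> that(2) by simp
  qed
  then show False
    using closed_nbhd_not_subset[of v t] \<open>t \<in> N - I\<close> unfolding N_def by blast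
qed

lemma independent_card_le_degree_inside:
  assumes "v \<in> V" and independent: "independent_set V E I" and "v \<in> I"
  shows "card I \<le> card {u. E v u}"
proof (rule ccontr)
  define N where "N = {u. E v u}"
  assume "\<not> card I \<le> card {u. E v u}"
  moreover have N_outside: "N \<subseteq> V - I"
    using edge_in_V independent_setD(2)[OF independent \<open>v \<in> I\<close>] unfolding N_def by blast
  moreover have "finite N" and "finite I"
    using calculation(2) independent_setD(1)[OF independent] finite_V finite_subset by blast+
  ultimately have card_le: "card N \<le> card (I - {v})"
    using \<open>v \<in> I\<close> unfolding N_def by simp
  have comparable: "pairwise arrow_comparable (I - {v})"
    using pairwise_comparable_common_non_nbr[OF independent Diff_subset assms(1)]
      independent_setD(2)[OF independent \<open>v \<in> I\<close>] by blast
  have witnesses_in: "pairwise (\<lambda>a b. {x. arrow V E a x b} \<subseteq> N) (I - {v})"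
    using arrow_witness_nbrs(2)[OF independent] \<open>v \<in> I\<close> sym unfolding N_def pairwise_def by blast
  have "2 \<le> card (I - {v})"
    using card_nbrs_ge_2[OF assms(1)] card_le unfolding N_def by linarith
  have missing: "\<forall>c\<in>I - {v}. \<exists>t\<in>N. \<not> E t c"
  proof
    fix c
    assume "c \<in> I - {v}"
    moreover obtain w where "w \<in> I - {v}" "w \<noteq> c"
      using exists_other_if_card_ge_2[OF \<open>2 \<le> card (I - {v})\<close>] by blast
    ultimately show "\<exists>t\<in>N. \<not> E t c"
      using nbrs_not_subset_nbrs[of v c w] assms(1) independent_setD[OF independent] \<open>v \<in> I\<close>
      unfolding N_def by blast
  qed
  obtain g where "\<forall>c\<in>I - {v}. g c \<in> N \<and> \<not> E (g c) c" and onto: "N \<subseteq> g ` (I - {v})"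
    by (rule choice_onto_if_card_le[OF independent Diff_subset comparable witnesses_in \<open>finite N\<close>
          card_le missing])
  then have clique: "E s t" if "s \<in> N" "t \<in> N" "s \<noteq> t" for s t
    using clique_of_choice[OF independent Diff_subset comparable witnesses_in subset_refl N_outside onto]
      that by blast
  obtain s where "s \<in> N"
    using card_nbrs_ge_2[OF assms(1)] unfolding N_def by fastforce
  then show False
    using closed_nbhd_not_subset[of v s] clique unfolding N_def by blast
qed

lemma independent_card_le_degree:
  assumes "v \<in> V" and "independent_set V E I"
  shows "card I \<le> card {u. E v u}"
  using independent_card_le_degree_inside independent_card_le_degree_outside assms by blast

context
  fixes S I :: "'a set"
  assumes separating: "separating_set V E S" and independent: "independent_set V E I"
    and card_less: "card S < card I"
    and no_isolated: "\<forall>c\<in>V - S. \<exists>c'\<in>V - S. E c c'"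
begin

lemma I_comparable: "pairwise arrow_comparable I"
proof (rule pairwiseI)
  fix a b
  assume ab: "a \<in> I" "b \<in> I" "a \<noteq> b"
  have "2 < card I"
    using card_less card_separating_ge_2[OF separating] by linarith
  then have "\<not> I \<subseteq> {a, b}"
    using card_mono[of "{a, b}" I] card_insert_le_m1[of 2 "{b}" a] by fastforce
  then obtain z where "z \<in> I" "z \<noteq> a" "z \<noteq> b"
    by blast
  then show "arrow_comparable a b"
    using arrow_or_arrow[of a b z] ab independent_setD[OF independent] by blast
qed

lemma I_outside_witnesses: "pairwise (\<lambda>a b. {x. arrow V E a x b} \<subseteq> S - I) (I - S)"
proof (rule pairwiseI, rule subsetI)
  fix a b x
  assume ab: "a \<in> I - S" "b \<in> I - S" "a \<noteq> b" and "x \<in> {x. arrow V E a x b}"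
  then have arrow: "arrow V E a x b" by blast
  then have "x \<notin> I"
    using arrow_witness_nbrs(1)[OF independent _ _ ab(3)] ab by blast
  moreover have "x \<in> S"
  proof (rule ccontr)
    assume "x \<notin> S"
    then have "x \<in> V - S" and "E a x" and "dominates_pair ((V - S) - {b}) E a x"
      using arrow dominates_pair_mono[of "(V - S) - {b}" "V - {b}"] unfolding arrow_def by blast+
    moreover have "a \<in> V - S"
      using ab(1) independent_setD(1)[OF independent] by blast
    ultimately have "b \<in> V - S" and "\<forall>y\<in>V - S. \<not> E b y"
      using isolated_if_pair_dominates[OF _ _ separating_setD(2)[OF separating]] sym irrefl by blast+
    then show False
      using no_isolated by blast
  qed
  ultimately show "x \<in> S - I"
    by blast
qed

lemma card_S_outside_I_less: "card (S - I) < card (I - S)"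
  using card_Diff_less_swap[OF _ _ card_less] separating_setD(1)[OF separating]
    independent_setD(1)[OF independent] finite_V finite_subset by blast

lemma S_outside_I_nonempty: "S - I \<noteq> {}"
proof
  assume "S - I = {}"
  then have "I - S = {}"
    using separating_subset_independent[OF separating independent] by blast
  then show False
    using card_S_outside_I_less \<open>S - I = {}\<close> by simp
qed

context
  fixes c0 :: 'a
  assumes c0: "c0 \<in> I - S"
    and misses: "\<forall>t\<in>S - I. \<exists>c\<in>I - S - {c0}. t \<in> only_misses E I (S - I) c"
    and clique: "\<forall>s\<in>S - I. \<forall>t\<in>S - I. s \<noteq> t \<longrightarrow> E s t"
begin

lemma no_arrow_from_c0:
  assumes "d \<in> V - S" and "d \<notin> I"
  shows "\<not> arrow V E c0 z d"
proof
  assume arrow: "arrow V E c0 z d"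
  then have "z \<in> V" and "E c0 z" and dom: "dominates_pair (V - {d}) E c0 z"
    unfolding arrow_def by blast+
  have "z \<notin> I"
    using independent_setD(2)[OF independent] c0 \<open>E c0 z\<close> by blast
  have z_nbrs: "E z i" if "i \<in> I - {c0}" for i
    using dominates_pairD[OF dom, of i] that assms(2) \<open>z \<notin> I\<close> c0 independent_setD[OF independent] sym
    by blast
  show False
  proof (cases "z \<in> S")
    case True
    then show False
      using misses \<open>z \<notin> I\<close> z_nbrs unfolding only_misses_def by blast
  next
    case False
    then have "z \<in> V - S" and "c0 \<in> V - S"
      using \<open>z \<in> V\<close> c0 independent_setD(1)[OF independent] by blast+
    moreover have "dominates_pair ((V - S) - {d}) E c0 z"
      by (rule dominates_pair_mono[OF _ dom]) blast
    ultimately have "\<forall>y\<in>V - S. \<not> E d y"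
      using isolated_if_pair_dominates(2)[of E "V - S" c0 z d] separating_setD(2)[OF separating]
        \<open>E c0 z\<close> sym irrefl by blast
    then show False
      using no_isolated assms(1) by blast
  qed
qed

lemma no_arrow_to_c0:
  assumes "d \<in> V - S" and "w \<in> I - S - {c0}" and "\<not> E w d"
    and "reach_in (V - S) E u w" and "\<not> reach_in (V - S) E u d"
  shows "\<not> arrow V E d y c0"
proof
  assume arrow: "arrow V E d y c0"
  then have "y \<in> V" and "E d y" and "\<not> E y c0" and dom: "dominates_pair (V - {c0}) E d y"
    unfolding arrow_def by blast+
  have "w \<in> V" "w \<noteq> d"
    using assms independent_setD(1)[OF independent] by blast+
  then have "E w y"
    using dominates_pairD[OF dom, of w] assms(2,3) \<open>E d y\<close> sym by blast
  show False
  proof (cases "y \<in> S")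
    case True
    then have "y \<in> S - I"
      using \<open>E w y\<close> assms(2) independent_setD(2)[OF independent] by blast
    then show False
      using misses \<open>\<not> E y c0\<close> c0 unfolding only_misses_def by blast
  next
    case False
    then have "reach_in (V - S) E u d"
      using reach_in.step[OF reach_in.step[OF assms(4) \<open>E w y\<close>] sym[OF \<open>E d y\<close>]] \<open>y \<in> V\<close> assms(1)
      by blast
    then show False
      using assms(5) by blast
  qed
qed

lemma common_nbr_of_I_outside_impossible:
  assumes "u \<in> V - S" and u_nbrs: "\<forall>j\<in>I - S. E u j"
  shows False
proof -
  obtain d where d: "d \<in> V - S" "\<not> reach_in (V - S) E u d"
    using not_connected_in_unreachable[OF separating_setD(2)[OF separating] assms(1)] sym by blast
  have reach: "reach_in (V - S) E u j" if "j \<in> I - S" for j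
    using reach_in_edge[of u "V - S" j E] assms that independent_setD(1)[OF independent] by blast
  have unreached: "j \<noteq> d" "\<not> E j d" if "j \<in> I - S" for j
    using reach[OF that] d(2) reach_in.step[of "V - S" E u j d] d(1) by blast+
  then have "d \<notin> I"
    using d(1) by blast
  have "1 \<le> card (S - I)"
    using S_outside_I_nonempty separating_setD(1)[OF separating] finite_V
    by (meson card_0_eq finite_Diff finite_subset less_one not_le)
  then obtain w where w: "w \<in> I - S - {c0}"
    using exists_other_if_card_ge_2[of "I - S" c0] card_S_outside_I_less by force
  have "c0 \<in> V" and "d \<in> V"
    using c0 d(1) independent_setD(1)[OF independent] by blast+
  moreover have "\<not> dominates_pair V E c0 d"
    using dominates_pairD[of V E c0 d w] w unreached[of w] independent_setD[OF independent] c0 by blast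
  moreover have "reach_in (V - S) E u w" and "\<not> E w d"
    using reach unreached w by blast+
  ultimately show False
    using nonadjacent_pair_cases[of c0 d] unreached[OF c0] no_arrow_from_c0[OF d(1) \<open>d \<notin> I\<close>]
      no_arrow_to_c0[OF d(1) w \<open>\<not> E w d\<close> \<open>reach_in (V - S) E u w\<close> d(2)] by blast
qed

lemma vertex_deletion_pair_avoids_S:
  assumes "t \<in> S - I" and "r \<in> S" and "r' \<in> V" and "r \<noteq> t" and "r' \<noteq> t"
    and "r = r' \<or> E r r'" and "\<not> E r t" and "\<not> E r' t"
    and dom: "dominates_pair (V - {t}) E r r'"
  shows False
proof -
  have "r \<in> I"
    using clique assms(1,2,4,7) by blast
  have "c0 \<in> V - {t}"
    using c0 assms(1) independent_setD(1)[OF independent] by blast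
  then have "c0 = r' \<or> E c0 r'"
    using dominates_pairD[OF dom] c0 assms(2) \<open>r \<in> I\<close> independent_setD(2)[OF independent] by blast
  then have "E r r'"
    using assms(2,6) c0 \<open>r \<in> I\<close> independent_setD(2)[OF independent] by blast
  then have "r' \<notin> I"
    using \<open>r \<in> I\<close> independent_setD(2)[OF independent] by blast
  then have "r' \<in> V - S"
    using clique assms(1,3,5,8) sym by blast
  moreover have "E r' j" if "j \<in> I - S" for j
    using dominates_pairD[OF dom, of j] that assms(1,2) \<open>r \<in> I\<close> \<open>r' \<notin> I\<close>
      independent_setD[OF independent] sym by blast
  ultimately show False
    using common_nbr_of_I_outside_impossible by blast
qed

end

lemma larger_independent_impossible: False
proof -
  have comparable: "pairwise arrow_comparable (I - S)"
    using pairwise_subset[OF I_comparable] by blast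
  have fin: "finite (S - I)" and sub: "S - I \<subseteq> V - I"
    using separating_setD(1)[OF separating] finite_V finite_subset by blast+
  obtain c0 where c0: "c0 \<in> I - S"
    and misses: "\<forall>t\<in>S - I. \<exists>c\<in>I - S - {c0}. t \<in> only_misses E I (S - I) c"
    and clique: "\<forall>s\<in>S - I. \<forall>t\<in>S - I. s \<noteq> t \<longrightarrow> E s t"
    by (rule clique_if_card_less[OF independent Diff_subset comparable I_outside_witnesses fin
          card_S_outside_I_less sub])
  obtain t where "t \<in> S - I"
    using S_outside_I_nonempty by blast
  then obtain p q where pq: "p \<in> V" "q \<in> V" "p \<noteq> t" "q \<noteq> t" "p = q \<or> E p q" "\<not> E p t" "\<not> E q t"
    and dom: "dominates_pair (V - {t}) E p q"
    using vertex_deletion_pair separating_setD(1)[OF separating] by blast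
  have "p \<in> S \<or> q \<in> S"
    using dominating_pair_meets_separating[OF separating _ pq(1,2,5) dom] \<open>t \<in> S - I\<close> by blast
  then show False
  proof
    assume "p \<in> S"
    then show False
      using vertex_deletion_pair_avoids_S[OF c0 misses clique \<open>t \<in> S - I\<close> _ pq(2-7) dom] by blast
  next
    assume "q \<in> S"
    have "q = p \<or> E q p"
      using pq(5) sym by blast
    moreover have "dominates_pair (V - {t}) E q p"
      using dom dominates_pair_commute by metis
    ultimately show False
      using vertex_deletion_pair_avoids_S[OF c0 misses clique \<open>t \<in> S - I\<close> \<open>q \<in> S\<close> pq(1) pq(4,3)
          _ pq(7,6)] by blast
  qed
qed

end

lemma independent_card_le_separating:
  assumes "separating_set V E S" and "independent_set V E I"
  shows "card I \<le> card S"
proof (cases "\<exists>c\<in>V - S. \<forall>c'\<in>V - S. \<not> E c c'")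
  case True
  then obtain c where "c \<in> V" and "{u. E c u} \<subseteq> S"
    using edge_in_V by blast
  then show ?thesis
    using independent_card_le_degree[OF _ assms(2)] card_mono[of S "{u. E c u}"]
      separating_setD(1)[OF assms(1)] finite_V finite_subset le_trans by metis
next
  case False
  then show ?thesis
    using larger_independent_impossible[OF assms] by (meson not_le)
qed

lemma independence_number_le_connectivity: "independence_number V E \<le> connectivity V E"
proof -
  obtain v where "v \<in> V"
    using simple unfolding simple_graph_def by blast
  then obtain S where "separating_set V E S" and "card S = connectivity V E"
    using connectivity_attained[OF separating_nbrs] by blast
  then show ?thesis
    using independence_number_le[OF finite_V] independent_card_le_separating by metis
qed

end

theorem theorem4p1:
  fixes V :: "'a set" and E :: "'a \<Rightarrow> 'a \<Rightarrow> bool"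
  assumes "simple_graph V E"
    and "connected_in V E"
    and "maximal_vertex_critical 3 V E"
  shows "independence_number V E \<le> connectivity V E"
proof -
  interpret max_3_critical V E
    using assms by unfold_locales
  show ?thesis
    by (rule independence_number_le_connectivity)
qed

end
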